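(* Let $K_n(\lambda)$ be defined by $K_0=2$, $K_1=1$, $K_2=\lambda-2$, $K_3=\lambda-3$, $K_{2p+1}=(\lambda-2)K_{2p-1}-K_{2p-3}$ and $K_{2p}=(\lambda-2)K_{2p-2}-K_{2p-4}$ ($p\ge2$), and let $q(\lambda)=\lambda^2-4\lambda$. Then for $p\ge0$: $$K_{2p}(\lambda)=\frac{1}{2^{p-1}}\sum_{i=0}^{\lfloor p/2\rfloor}\binom{p}{2i}(\lambda-2)^{p-2i}q(\lambda)^i,$$ $$K_{2p+1}(\lambda)=\frac{1}{2^{p}}\sum_{i=0}^{\lfloor p/2\rfloor}\binom{p}{2i}(\lambda-2)^{p-2i}q(\lambda)^i+\frac{\lambda-4}{2^{p}}\sum_{i=0}^{\lfloor (p-1)/2\rfloor}\binom{p}{2i+1}(\lambda-2)^{p-2i-1}q(\lambda)^i.$$ *)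

theory Defs
  imports Complex_Main
begin

fun K :: "nat \<Rightarrow> real \<Rightarrow> real" where
  "K 0 x = 2"
| "K (Suc 0) x = 1"
| "K (Suc (Suc 0)) x = x - 2"
| "K (Suc (Suc (Suc 0))) x = x - 3"
| "K (Suc (Suc (Suc (Suc n)))) x = (x - 2) * K (Suc (Suc n)) x - K n x"

definition q :: "real \<Rightarrow> real" where
  "q x = x^2 - 4 * x"

end

theory Submission
  imports Defs
begin

text \<open>
  Put \<open>a = \<lambda> - 2\<close> and \<open>c = q(\<lambda>) = a\<^sup>2 - 4\<close>. The two sums in the statement are the
  parts \<open>A\<^sub>p, B\<^sub>p\<close> of \<open>(a + \<surd>c)\<^sup>p = A\<^sub>p + \<surd>c B\<^sub>p\<close>; multiplying by \<open>a + \<surd>c\<close>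
  gives \<open>A\<^sub>p\<^sub>+\<^sub>1 = a A\<^sub>p + c B\<^sub>p\<close> and \<open>B\<^sub>p\<^sub>+\<^sub>1 = A\<^sub>p + a B\<^sub>p\<close>, so both satisfy
  \<open>w\<^sub>p\<^sub>+\<^sub>2 = 2a w\<^sub>p\<^sub>+\<^sub>1 - (a\<^sup>2 - c) w\<^sub>p = 2a w\<^sub>p\<^sub>+\<^sub>1 - 4 w\<^sub>p\<close>. Dividing by \<open>2\<^sup>p\<close> turns
  this into the recurrence \<open>u\<^sub>p\<^sub>+\<^sub>2 = a u\<^sub>p\<^sub>+\<^sub>1 - u\<^sub>p\<close> obeyed by \<open>K\<^sub>2\<^sub>p\<close> and \<open>K\<^sub>2\<^sub>p\<^sub>+\<^sub>1\<close>,
  and the claimed closed forms are checked at \<open>p = 0, 1\<close>.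
\<close>

definition binom_even_part :: "'a::comm_semiring_1 \<Rightarrow> 'a \<Rightarrow> nat \<Rightarrow> 'a" where
  "binom_even_part a c p = (\<Sum>i\<le>p. of_nat (p choose (2*i)) * a^(p - 2*i) * c^i)"

definition binom_odd_part :: "'a::comm_semiring_1 \<Rightarrow> 'a \<Rightarrow> nat \<Rightarrow> 'a" where
  "binom_odd_part a c p = (\<Sum>i\<le>p. of_nat (p choose (2*i+1)) * a^(p - 2*i - 1) * c^i)"

lemma choose_mult_power_Suc_diff:
  fixes a :: "'a::comm_semiring_1"
  shows "a * (of_nat (n choose k) * a ^ (n - k)) = of_nat (n choose k) * a ^ (Suc n - k)"
  by (cases "k \<le> n") (simp_all add: Suc_diff_le mult.left_commute binomial_eq_0)

lemma binom_even_part_Suc: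
  fixes a c :: "'a::comm_semiring_1"
  shows "binom_even_part a c (Suc p) = a * binom_even_part a c p + c * binom_odd_part a c p"
proof -
  have "binom_even_part a c p = (\<Sum>i\<le>Suc p. of_nat (p choose (2*i)) * a^(p - 2*i) * c^i)"
    unfolding binom_even_part_def by (simp add: binomial_eq_0)
  also have "\<dots> = a^p + (\<Sum>i\<le>p. of_nat (p choose (2*i+2)) * a^(p - (2*i+2)) * c^(i+1))"
    by (subst sum.atMost_Suc_shift) simp
  finally have "a * binom_even_part a c p
      = a^Suc p + (\<Sum>i\<le>p. of_nat (p choose (2*i+2)) * a^(p - 2*i - 1) * c^(i+1))"
    using choose_mult_power_Suc_diff[of a p]
    by (simp add: distrib_left sum_distrib_left flip: mult.assoc)
  moreover have "c * binom_odd_part a c p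
      = (\<Sum>i\<le>p. of_nat (p choose (2*i+1)) * a^(p - 2*i - 1) * c^(i+1))"
    unfolding binom_odd_part_def sum_distrib_left by (simp add: algebra_simps)
  moreover have "binom_even_part a c (Suc p)
      = a^Suc p + (\<Sum>i\<le>p. of_nat ((p choose (2*i+1)) + (p choose (2*i+2))) * a^(p - 2*i - 1) * c^(i+1))"
    unfolding binom_even_part_def by (subst sum.atMost_Suc_shift) simp
  ultimately show ?thesis
    by (simp add: sum.distrib distrib_right add_ac)
qed

lemma binom_odd_part_Suc:
  fixes a c :: "'a::comm_semiring_1"
  shows "binom_odd_part a c (Suc p) = binom_even_part a c p + a * binom_odd_part a c p"
proof -
  have "binom_odd_part a c p = (\<Sum>i\<le>Suc p. of_nat (p choose (2*i+1)) * a^(p - 2*i - 1) * c^i)"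
    unfolding binom_odd_part_def by (simp add: binomial_eq_0)
  then have "a * binom_odd_part a c p
      = (\<Sum>i\<le>Suc p. of_nat (p choose (2*i+1)) * a^(p - 2*i) * c^i)"
    using choose_mult_power_Suc_diff[of a p]
    by (simp add: sum_distrib_left binomial_eq_0 flip: mult.assoc)
  moreover have "binom_even_part a c p = (\<Sum>i\<le>Suc p. of_nat (p choose (2*i)) * a^(p - 2*i) * c^i)"
    unfolding binom_even_part_def by (simp add: binomial_eq_0)
  ultimately show ?thesis
    unfolding binom_odd_part_def by (simp add: sum.distrib distrib_right)
qed

lemma binom_even_part_Suc_Suc:
  fixes a c :: "'a::comm_ring_1"
  shows "binom_even_part a c (Suc (Suc p))
    = 2 * a * binom_even_part a c (Suc p) - (a^2 - c) * binom_even_part a c p"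
  by (simp add: binom_even_part_Suc binom_odd_part_Suc algebra_simps power2_eq_square)

lemma binom_odd_part_Suc_Suc:
  fixes a c :: "'a::comm_ring_1"
  shows "binom_odd_part a c (Suc (Suc p))
    = 2 * a * binom_odd_part a c (Suc p) - (a^2 - c) * binom_odd_part a c p"
  by (simp add: binom_even_part_Suc binom_odd_part_Suc algebra_simps power2_eq_square)

lemma two_step_recurrence_unique:
  assumes "u 0 = v 0" "u 1 = v 1"
    and "\<And>n. u (Suc (Suc n)) = f (u (Suc n)) (u n)"
    and "\<And>n. v (Suc (Suc n)) = f (v (Suc n)) (v n)"
  shows "u n = v n"
proof -
  have "u n = v n \<and> u (Suc n) = v (Suc n)"
    by (induction n) (simp_all add: assms flip: One_nat_def)
  then show ?thesis ..
qed

lemma recurrence_divide_power_two: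
  fixes w :: "nat \<Rightarrow> 'a::field_char_0"
  assumes "w (Suc (Suc n)) = 2 * a * w (Suc n) - 4 * w n"
  shows "w (Suc (Suc n)) / 2 ^ Suc (Suc n) = a * (w (Suc n) / 2 ^ Suc n) - w n / 2 ^ n"
  using assms by (simp add: field_simps)

lemma K_Suc_Suc_even: "K (2 * Suc (Suc p)) x = (x - 2) * K (2 * Suc p) x - K (2 * p) x"
  by (simp add: numeral_2_eq_2)

lemma K_Suc_Suc_odd: "K (2 * Suc (Suc p) + 1) x = (x - 2) * K (2 * Suc p + 1) x - K (2 * p + 1) x"
  by (simp add: numeral_2_eq_2)

lemma square_minus_q: "(x - 2)^2 - q x = 4"
  by (simp add: q_def power2_eq_square algebra_simps)

lemma K_even_eq: "K (2 * p) x = 2 * binom_even_part (x - 2) (q x) p / 2 ^ p"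
proof (rule two_step_recurrence_unique[where f = "\<lambda>y z. (x - 2) * y - z"])
  let ?A = "binom_even_part (x - 2) (q x)"
  fix n
  have "2 * ?A (Suc (Suc n)) = 2 * (x - 2) * (2 * ?A (Suc n)) - 4 * (2 * ?A n)"
    unfolding binom_even_part_Suc_Suc square_minus_q by simp
  then show "2 * ?A (Suc (Suc n)) / 2 ^ Suc (Suc n)
      = (x - 2) * (2 * ?A (Suc n) / 2 ^ Suc n) - 2 * ?A n / 2 ^ n"
    by (rule recurrence_divide_power_two)
qed (simp_all add: K_Suc_Suc_even binom_even_part_def numeral_2_eq_2)

lemma K_odd_eq:
  "K (2 * p + 1) x = (binom_even_part (x - 2) (q x) p + (x - 4) * binom_odd_part (x - 2) (q x) p) / 2 ^ p"
proof (rule two_step_recurrence_unique[where f = "\<lambda>y z. (x - 2) * y - z"])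
  let ?w = "\<lambda>n. binom_even_part (x - 2) (q x) n + (x - 4) * binom_odd_part (x - 2) (q x) n"
  fix n
  have "?w (Suc (Suc n)) = 2 * (x - 2) * ?w (Suc n) - 4 * ?w n"
    unfolding binom_even_part_Suc_Suc binom_odd_part_Suc_Suc square_minus_q
    by (simp add: algebra_simps)
  then show "?w (Suc (Suc n)) / 2 ^ Suc (Suc n) = (x - 2) * (?w (Suc n) / 2 ^ Suc n) - ?w n / 2 ^ n"
    by (rule recurrence_divide_power_two)
qed (simp_all add: K_Suc_Suc_odd binom_even_part_def binom_odd_part_def numeral_2_eq_2)

theorem lemma6:
  fixes x :: real and p :: nat
  shows "(K (2*p) x = (1 / 2 powr (real p - 1)) *
           (\<Sum>i = 0..p div 2. real (p choose (2*i)) * (x - 2)^(p - 2*i) * (q x)^i)) \<and>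
         (K (2*p+1) x = (1 / 2^p) *
           (\<Sum>i = 0..p div 2. real (p choose (2*i)) * (x - 2)^(p - 2*i) * (q x)^i)
         + ((x - 4) / 2^p) *
           (\<Sum>i \<in> {i. int (2*i) \<le> int p - 1}. real (p choose (2*i+1)) * (x - 2)^(p - 2*i - 1) * (q x)^i))"
proof -
  have even_sum: "(\<Sum>i = 0..p div 2. real (p choose (2*i)) * (x - 2)^(p - 2*i) * (q x)^i)
      = binom_even_part (x - 2) (q x) p"
    unfolding binom_even_part_def by (rule sum.mono_neutral_left) auto
  have odd_sum: "(\<Sum>i \<in> {i. int (2*i) \<le> int p - 1}. real (p choose (2*i+1)) * (x - 2)^(p - 2*i - 1) * (q x)^i)
      = binom_odd_part (x - 2) (q x) p"
    unfolding binom_odd_part_def by (rule sum.mono_neutral_left) auto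
  have "1 / 2 powr (real p - 1) = 2 / (2::real) ^ p"
    by (simp add: powr_diff powr_realpow)
  then show ?thesis
    unfolding even_sum odd_sum using K_even_eq K_odd_eq by (simp add: add_divide_distrib)
qed

end
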